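(* Let $R$ be a pmp equivalence relation and $F\subseteq\llbracket R\rrbracket$ finite. For every $\kappa>0$ there is $\varepsilon>0$ such that $s(F,n)\leq s_\varepsilon(F,n)+\kappa$ for all $n\in\mathbb N$. The same holds with $\underline s$ in place of $s$ (both sides), and with $s_\omega$ in place of $s$ for any nonprincipal ultrafilter $\omega$.
   Context: Let $(X,\mu)$ be a standard probability space and $R$ a pmp countable Borel equivalence relation. $\llbracket R\rrbracket$ denotes the set of partial measure-preserving Borel bijections between Borel subsets of $X$ with graph contained in $R$, modulo null sets, with composition, inverses and identity $1$. Pairwise orthogonal elements (pairwise disjoint domains and ranges) have a sum; $\mathbf\Sigma F$ is the set of finite sums of pairwise orthogonal elements of $F$; $F_\pm=F\cup\{s^{-1}:s\in F\}\cup\{1\}$; $F_\pm^n$ the products of $n$ elements of $F_\pm$. $|s-t|=\mu\{x\in\operatorname{dom}s\cup\operatorname{dom}t:s(x)\neq t(x)\}$ (with $s(x)\neq t(x)$ on $\operatorname{dom}s\triangle\operatorname{dom}t$), $\tau(s)=\mu\{x\in\operatorname{dom}s:s(x)=x\}$. $\llbracket d\rrbracket$: partial permutations of $\{1,\dots,d\}$ with uniform measure, same distance, trace $\operatorname{tr}$. ${\rm SA}(F,n,\delta,d)$ is the set of maps $\varphi:\llbracket R\rrbracket\to\llbracket d\rrbracket$ with $\varphi(1)=1$ such that $|\varphi(st)-\varphi(s)\varphi(t)|<\delta$ for all $s,t\in\mathbf\Sigma F_\pm^n$ with $st\in\mathbf\Sigma F_\pm^n$, and $|\operatorname{tr}(\varphi(s))-\tau(s)|<\delta$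 for all $s\in\mathbf\Sigma F_\pm^n$. For maps $\varphi,\psi$ put $|\varphi-\psi|_F=\max_{s\in F}|\varphi(s)-\psi(s)|$, and for $\varepsilon\ge0$ let $N_\varepsilon(S)$ be the minimal number of closed $|\cdot|_F$-balls of radius $\varepsilon$ covering a set $S$ of maps (so $N_0({\rm SA}(F,n,\delta,d))={\rm NSA}(F,n,\delta,d)$, the number of distinct restrictions to $F$). Define $s_\varepsilon(F,n,\delta)=\limsup_{d\to\infty}\frac{1}{d\log d}\log N_\varepsilon({\rm SA}(F,n,\delta,d))$ ($\log0=-\infty$), $s_\varepsilon(F,n)=\inf_{\delta>0}s_\varepsilon(F,n,\delta)$, $s_\varepsilon(F)=\inf_n s_\varepsilon(F,n)$; $s(F,n),s(F)$ are the case $\varepsilon=0$. The versions $\underline s$ use $\liminf_d$ and $s_\omega$ use $\lim_{d\to\omega}$. *)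

theory Defs
  imports "HOL-Probability.Probability"
begin

definition pmap_fun :: "('a \<rightharpoonup> 'a) \<Rightarrow> 'a \<Rightarrow> 'a" where
  "pmap_fun f = (\<lambda>x. the (f x))"

definition partial_borel_bij :: "'a measure \<Rightarrow> ('a \<times> 'a) set \<Rightarrow> ('a \<rightharpoonup> 'a) \<Rightarrow> bool" where
  "partial_borel_bij M R f \<longleftrightarrow>
     dom f \<in> sets M \<and> ran f \<in> sets M \<and> inj_on f (dom f) \<and>
     (\<forall>x\<in>dom f. (x, pmap_fun f x) \<in> R) \<and>
     (\<forall>C\<in>sets M. {x\<in>dom f. pmap_fun f x \<in> C} \<in> sets M) \<and>
     (\<forall>C\<in>sets M. C \<subseteq> dom f \<longrightarrow> pmap_fun f ` C \<in> sets M)"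

definition measure_pres :: "'a measure \<Rightarrow> ('a \<rightharpoonup> 'a) \<Rightarrow> bool" where
  "measure_pres M f \<longleftrightarrow>
     (\<forall>C\<in>sets M. C \<subseteq> dom f \<longrightarrow> emeasure M (pmap_fun f ` C) = emeasure M C)"

definition pbij :: "'a measure \<Rightarrow> ('a \<times> 'a) set \<Rightarrow> ('a \<rightharpoonup> 'a) \<Rightarrow> bool" where
  "pbij M R f \<longleftrightarrow> partial_borel_bij M R f \<and> measure_pres M f"

definition pmp_cber :: "'a::polish_space measure \<Rightarrow> ('a \<times> 'a) set \<Rightarrow> bool" where
  "pmp_cber M R \<longleftrightarrow>
     prob_space M \<and> sets M = sets borel \<and>
     equiv UNIV R \<and> (\<forall>x. countable (R `` {x})) \<and> R \<in> sets (M \<Otimes>\<^sub>M M) \<and>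
     (\<forall>f. partial_borel_bij M R f \<longrightarrow> measure_pres M f)"

section \<open>The full pseudogroup [[R]] (classes modulo null sets)\<close>

definition pg_class :: "'a measure \<Rightarrow> ('a \<times> 'a) set \<Rightarrow> ('a \<rightharpoonup> 'a) \<Rightarrow> ('a \<rightharpoonup> 'a) set" where
  "pg_class M R f = {g. pbij M R g \<and> {x. g x \<noteq> f x} \<in> null_sets M}"

definition fullpg :: "'a measure \<Rightarrow> ('a \<times> 'a) set \<Rightarrow> ('a \<rightharpoonup> 'a) set set" where
  "fullpg M R = {pg_class M R f | f. pbij M R f}"

definition pg_rep :: "('a \<rightharpoonup> 'a) set \<Rightarrow> ('a \<rightharpoonup> 'a)" where
  "pg_rep S = (SOME s. s \<in> S)"

definition pg_mult :: "'a measure \<Rightarrow> ('a \<times> 'a) set \<Rightarrow> ('a \<rightharpoonup> 'a) set \<Rightarrow> ('a \<rightharpoonup> 'a) set \<Rightarrow> ('a \<rightharpoonup> 'a) set" where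
  "pg_mult M R S T = pg_class M R (pg_rep S \<circ>\<^sub>m pg_rep T)"

definition pinv :: "('a \<rightharpoonup> 'a) \<Rightarrow> ('a \<rightharpoonup> 'a)" where
  "pinv f = (\<lambda>y. if y \<in> ran f then Some (THE x. f x = Some y) else None)"

definition pg_inv :: "'a measure \<Rightarrow> ('a \<times> 'a) set \<Rightarrow> ('a \<rightharpoonup> 'a) set \<Rightarrow> ('a \<rightharpoonup> 'a) set" where
  "pg_inv M R S = pg_class M R (pinv (pg_rep S))"

definition pg_one :: "'a measure \<Rightarrow> ('a \<times> 'a) set \<Rightarrow> ('a \<rightharpoonup> 'a) set" where
  "pg_one M R = pg_class M R (\<lambda>x. Some x)"

definition pg_trace :: "'a measure \<Rightarrow> ('a \<rightharpoonup> 'a) set \<Rightarrow> real" where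
  "pg_trace M S = measure M {x. pg_rep S x = Some x}"

text \<open>Sigma F: finite sums of pairwise orthogonal elements of F (representatives chosen with
  pairwise disjoint domains and ranges).\<close>
definition pg_Sigma :: "'a measure \<Rightarrow> ('a \<times> 'a) set \<Rightarrow> ('a \<rightharpoonup> 'a) set set \<Rightarrow> ('a \<rightharpoonup> 'a) set set" where
  "pg_Sigma M R F = {pg_class M R (foldr (++) ss Map.empty) | ss.
      (\<forall>s\<in>set ss. pbij M R s \<and> pg_class M R s \<in> F) \<and>
      (\<forall>i<length ss. \<forall>j<length ss. i \<noteq> j \<longrightarrow>
          dom (ss!i) \<inter> dom (ss!j) = {} \<and> ran (ss!i) \<inter> ran (ss!j) = {})}"

definition pg_pm :: "'a measure \<Rightarrow> ('a \<times> 'a) set \<Rightarrow> ('a \<rightharpoonup> 'a) set set \<Rightarrow> ('a \<rightharpoonup> 'a) set set" where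
  "pg_pm M R F = F \<union> pg_inv M R ` F \<union> {pg_one M R}"

fun pg_pow :: "'a measure \<Rightarrow> ('a \<times> 'a) set \<Rightarrow> ('a \<rightharpoonup> 'a) set set \<Rightarrow> nat \<Rightarrow> ('a \<rightharpoonup> 'a) set set" where
  "pg_pow M R F 0 = {pg_one M R}"
| "pg_pow M R F (Suc n) = {pg_mult M R S T | S T. S \<in> pg_pm M R F \<and> T \<in> pg_pow M R F n}"

definition SigmaFn :: "'a measure \<Rightarrow> ('a \<times> 'a) set \<Rightarrow> ('a \<rightharpoonup> 'a) set set \<Rightarrow> nat \<Rightarrow> ('a \<rightharpoonup> 'a) set set" where
  "SigmaFn M R F n = pg_Sigma M R (pg_pow M R F n)"

definition pperm :: "nat \<Rightarrow> (nat \<rightharpoonup> nat) set" where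
  "pperm d = {\<sigma>. dom \<sigma> \<subseteq> {1..d} \<and> ran \<sigma> \<subseteq> {1..d} \<and> inj_on \<sigma> (dom \<sigma>)}"

definition pid :: "nat \<Rightarrow> (nat \<rightharpoonup> nat)" where
  "pid d = (\<lambda>i. if i \<in> {1..d} then Some i else None)"

definition ddist :: "nat \<Rightarrow> (nat \<rightharpoonup> nat) \<Rightarrow> (nat \<rightharpoonup> nat) \<Rightarrow> real" where
  "ddist d \<sigma> \<tau> = real (card {i\<in>{1..d}. \<sigma> i \<noteq> \<tau> i}) / real d"

definition dtr :: "nat \<Rightarrow> (nat \<rightharpoonup> nat) \<Rightarrow> real" where
  "dtr d \<sigma> = real (card {i\<in>{1..d}. \<sigma> i = Some i}) / real d"

definition SA :: "'a measure \<Rightarrow> ('a \<times> 'a) set \<Rightarrow> ('a \<rightharpoonup> 'a) set set \<Rightarrow> nat \<Rightarrow> real \<Rightarrow> nat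
                  \<Rightarrow> (('a \<rightharpoonup> 'a) set \<Rightarrow> (nat \<rightharpoonup> nat)) set" where
  "SA M R F n \<delta> d = {\<phi>. (\<forall>S\<in>fullpg M R. \<phi> S \<in> pperm d) \<and> \<phi> (pg_one M R) = pid d \<and>
      (\<forall>S\<in>SigmaFn M R F n. \<forall>T\<in>SigmaFn M R F n. pg_mult M R S T \<in> SigmaFn M R F n \<longrightarrow>
          ddist d (\<phi> (pg_mult M R S T)) (\<phi> S \<circ>\<^sub>m \<phi> T) < \<delta>) \<and>
      (\<forall>S\<in>SigmaFn M R F n. \<bar>dtr d (\<phi> S) - pg_trace M S\<bar> < \<delta>)}"

definition distF :: "nat \<Rightarrow> ('b set) \<Rightarrow> ('b \<Rightarrow> (nat \<rightharpoonup> nat)) \<Rightarrow> ('b \<Rightarrow> (nat \<rightharpoonup> nat)) \<Rightarrow> real" where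
  "distF d F \<phi> \<psi> = Max (insert 0 ((\<lambda>S. ddist d (\<phi> S) (\<psi> S)) ` F))"

definition covnum :: "'a measure \<Rightarrow> ('a \<times> 'a) set \<Rightarrow> ('a \<rightharpoonup> 'a) set set \<Rightarrow> nat \<Rightarrow> real
                      \<Rightarrow> (('a \<rightharpoonup> 'a) set \<Rightarrow> (nat \<rightharpoonup> nat)) set \<Rightarrow> nat" where
  "covnum M R F d \<epsilon> A = Inf {card C | C. finite C \<and>
       C \<subseteq> {\<psi>. \<forall>S\<in>fullpg M R. \<psi> S \<in> pperm d} \<and>
       A \<subseteq> (\<Union>\<psi>\<in>C. {\<phi>. distF d F \<phi> \<psi> \<le> \<epsilon>})}"

definition lognorm :: "nat \<Rightarrow> nat \<Rightarrow> ereal" where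
  "lognorm d N = (if N = 0 then -\<infinity> else ereal (ln (real N) / (real d * ln (real d))))"

text \<open>s_eps(F,n) with the limit along d given by agg (limsup, liminf or lim along an ultrafilter)\<close>
definition sdim :: "((nat \<Rightarrow> ereal) \<Rightarrow> ereal) \<Rightarrow> 'a measure \<Rightarrow> ('a \<times> 'a) set \<Rightarrow> ('a \<rightharpoonup> 'a) set set
                    \<Rightarrow> nat \<Rightarrow> real \<Rightarrow> ereal" where
  "sdim agg M R F n \<epsilon> =
     (INF \<delta>\<in>{0<..}. agg (\<lambda>d. lognorm d (covnum M R F d \<epsilon> (SA M R F n \<delta> d))))"

definition nonprincipal_ultrafilter :: "nat filter \<Rightarrow> bool" where
  "nonprincipal_ultrafilter \<omega> \<longleftrightarrow> \<omega> \<noteq> bot \<and>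
     (\<forall>P. eventually P \<omega> \<or> eventually (\<lambda>x. \<not> P x) \<omega>) \<and>
     (\<forall>k. \<not> eventually (\<lambda>d. d = k) \<omega>)"

end

theory Submission
  imports Defs
begin

(* The argument is a counting estimate at a fixed size d.  A closed |.|_F-ball of radius
   epsilon contains at most (2^d (d+1)^(epsilon d))^|F| distinct restrictions to F, because
   each coordinate ranges over a Hamming ball of radius epsilon d in the partial permutations
   of {1..d}.  Refining an optimal epsilon-cover of SA(F,n,delta,d) therefore yields an exact
   cover, so N_0 <= N_eps * (2^d (d+1)^(epsilon d))^|F|.  After normalising by d log d the
   error is |F| (ln 2 / ln d + 2 epsilon), which is below kappa for all large d once
   epsilon = kappa / (4 (|F|+1)).  Finally, limsup, liminf and limits along a nonprincipal
   ultrafilter are all "limit functionals": monotone under eventual inequality and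
   compatible with adding a constant; such a functional, followed by the infimum over
   delta, preserves an eventual inequality, which gives all three statements at once. *)

section \<open>Partial permutations and Hamming balls\<close>

lemma pperm_val:
  assumes "\<sigma> \<in> pperm d" shows "\<sigma> i \<in> insert None (Some ` {1..d})"
proof (cases "\<sigma> i")
  case (Some y) then have "y \<in> ran \<sigma>" by (auto simp: ran_def)
  then show ?thesis using assms Some unfolding pperm_def by auto
qed simp

lemma pperm_out:
  assumes "\<sigma> \<in> pperm d" "i \<notin> {1..d}" shows "\<sigma> i = None"
  using assms unfolding pperm_def by (auto simp: domIff)

lemma finite_pperm: "finite (pperm d)"
proof -
  let ?ext = "\<lambda>g i. if i \<in> {1..d} then g i else None"
  let ?P = "{1..d} \<rightarrow>\<^sub>E insert None (Some ` {1..d})"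
  have "pperm d \<subseteq> ?ext ` ?P"
  proof
    fix \<sigma> assume s: "\<sigma> \<in> pperm d"
    have "restrict \<sigma> {1..d} \<in> ?P" using pperm_val[OF s] by auto
    moreover have "\<sigma> = ?ext (restrict \<sigma> {1..d})"
      using pperm_out[OF s] by (auto simp: fun_eq_iff)
    ultimately show "\<sigma> \<in> ?ext ` ?P" by blast
  qed
  moreover have "finite (?ext ` ?P)" by (intro finite_imageI finite_PiE) auto
  ultimately show ?thesis by (rule finite_subset)
qed

definition disagree :: "nat \<Rightarrow> (nat \<rightharpoonup> nat) \<Rightarrow> (nat \<rightharpoonup> nat) \<Rightarrow> nat set" where
  "disagree d \<sigma> \<tau> = {i\<in>{1..d}. \<sigma> i \<noteq> \<tau> i}"

definition hball :: "nat \<Rightarrow> (nat \<rightharpoonup> nat) \<Rightarrow> nat \<Rightarrow> (nat \<rightharpoonup> nat) set" where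
  "hball d \<tau> k = {\<sigma>\<in>pperm d. card (disagree d \<sigma> \<tau>) \<le> k}"

lemma pperm_eq_by_disagreement:
  assumes "\<sigma> \<in> pperm d" "\<sigma>' \<in> pperm d" and D: "disagree d \<sigma> \<tau> = disagree d \<sigma>' \<tau>"
    and vals: "restrict \<sigma> (disagree d \<sigma> \<tau>) = restrict \<sigma>' (disagree d \<sigma>' \<tau>)"
  shows "\<sigma> = \<sigma>'"
proof
  fix i show "\<sigma> i = \<sigma>' i"
  proof (cases "i \<in> {1..d}")
    case False then show ?thesis using assms(1,2) by (simp add: pperm_out)
  next
    case i: True
    show ?thesis
    proof (cases "i \<in> disagree d \<sigma> \<tau>")
      case True
      then have "i \<in> disagree d \<sigma>' \<tau>" using D by simp
      then show ?thesis using True fun_cong[OF vals, of i] by (simp only: restrict_apply')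
    next
      case False
      then have "i \<notin> disagree d \<sigma>' \<tau>" using D by simp
      then have "\<sigma>' i = \<tau> i" using i by (simp add: disagree_def)
      moreover have "\<sigma> i = \<tau> i" using False i by (simp add: disagree_def)
      ultimately show ?thesis by simp
    qed
  qed
qed

text \<open>Counting estimate: choose the disagreement set (at most \<open>2^d\<close> ways) and the values on
  it (at most \<open>(d+1)^k\<close> ways).\<close>

lemma card_hball: "card (hball d \<tau> k) \<le> 2^d * (d+1)^k"
proof -
  let ?vals = "insert None (Some ` {1..d})"
  let ?Ds = "{D. D \<subseteq> {1..d} \<and> card D \<le> k}"
  let ?codes = "Sigma ?Ds (\<lambda>D. D \<rightarrow>\<^sub>E ?vals)"
  let ?code = "\<lambda>\<sigma>. (disagree d \<sigma> \<tau>, restrict \<sigma> (disagree d \<sigma> \<tau>))"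
  have inj: "inj_on ?code (hball d \<tau> k)"
  proof (rule inj_onI)
    fix \<sigma> \<sigma>' assume "\<sigma> \<in> hball d \<tau> k" "\<sigma>' \<in> hball d \<tau> k" and code: "?code \<sigma> = ?code \<sigma>'"
    then have "\<sigma> \<in> pperm d" "\<sigma>' \<in> pperm d" unfolding hball_def by auto
    moreover from code have "disagree d \<sigma> \<tau> = disagree d \<sigma>' \<tau>" by (rule Pair_inject)
    moreover from code have "restrict \<sigma> (disagree d \<sigma> \<tau>) = restrict \<sigma>' (disagree d \<sigma>' \<tau>)"
      by (rule Pair_inject)
    ultimately show "\<sigma> = \<sigma>'" by (rule pperm_eq_by_disagreement)
  qed
  have into: "?code ` hball d \<tau> k \<subseteq> ?codes"
  proof (rule image_subsetI)
    fix \<sigma> assume "\<sigma> \<in> hball d \<tau> k"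
    then have "\<sigma> \<in> pperm d" "card (disagree d \<sigma> \<tau>) \<le> k" unfolding hball_def by auto
    moreover have "disagree d \<sigma> \<tau> \<subseteq> {1..d}" unfolding disagree_def by auto
    moreover have "restrict \<sigma> (disagree d \<sigma> \<tau>) \<in> disagree d \<sigma> \<tau> \<rightarrow>\<^sub>E ?vals"
      using pperm_val[OF \<open>\<sigma> \<in> pperm d\<close>] by (simp add: PiE_iff)
    ultimately show "?code \<sigma> \<in> ?codes" by simp
  qed
  have fin_Ds: "finite ?Ds" by (rule finite_subset[of _ "Pow {1..d}"]) auto
  have fin_vals: "finite (D \<rightarrow>\<^sub>E ?vals)" if "D \<in> ?Ds" for D
    using that by (intro finite_PiE) (auto intro: finite_subset)
  have card_vals: "card (D \<rightarrow>\<^sub>E ?vals) \<le> (d+1)^k" if "D \<in> ?Ds" for D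
  proof -
    have "card (D \<rightarrow>\<^sub>E ?vals) = (d+1) ^ card D"
      using that by (subst card_PiE) (auto simp: finite_subset card_image card_insert_if)
    also have "\<dots> \<le> (d+1)^k" using that by (intro power_increasing) auto
    finally show ?thesis .
  qed
  have "card (hball d \<tau> k) = card (?code ` hball d \<tau> k)" using inj by (rule card_image[symmetric])
  also have "\<dots> \<le> card ?codes"
    using into fin_Ds fin_vals by (intro card_mono) (rule finite_SigmaI)
  also have "\<dots> = (\<Sum>D\<in>?Ds. card (D \<rightarrow>\<^sub>E ?vals))"
    using fin_Ds fin_vals by (intro card_SigmaI) auto
  also have "\<dots> \<le> (\<Sum>D\<in>?Ds. (d+1)^k)" using card_vals by (rule sum_mono)
  also have "\<dots> = card ?Ds * (d+1)^k" by simp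
  also have "card ?Ds \<le> card (Pow {1..d})" by (intro card_mono) auto
  also have "card (Pow {1..d}) = 2^d" by (simp add: card_Pow)
  finally show ?thesis by simp
qed

section \<open>Distances between maps into partial permutations\<close>

definition pperm_valued :: "'b set \<Rightarrow> nat \<Rightarrow> ('b \<Rightarrow> (nat \<rightharpoonup> nat)) set" where
  "pperm_valued G d = {\<psi>. \<forall>S\<in>G. \<psi> S \<in> pperm d}"

lemma card_disagree_le:
  assumes "d > 0" "ddist d \<sigma> \<tau> \<le> \<epsilon>"
  shows "card (disagree d \<sigma> \<tau>) \<le> nat \<lfloor>\<epsilon> * d\<rfloor>"
proof -
  have "real (card (disagree d \<sigma> \<tau>)) \<le> \<epsilon> * d"
    using assms unfolding ddist_def disagree_def by (simp add: divide_le_eq mult.commute)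
  then show ?thesis by linarith
qed

lemma ddist_le_distF:
  assumes "finite F" "S \<in> F"
  shows "ddist d (\<phi> S) (\<psi> S) \<le> distF d F \<phi> \<psi>"
  unfolding distF_def using assms by (intro Max_ge) auto

lemma distF_eq_0_if_agree:
  assumes "\<And>S. S \<in> F \<Longrightarrow> \<phi> S = \<psi> S"
  shows "distF d F \<phi> \<psi> = 0"
proof -
  have vals: "insert 0 ((\<lambda>S. ddist d (\<phi> S) (\<psi> S)) ` F) = {0}"
    using assms by (auto simp: ddist_def)
  show ?thesis unfolding distF_def vals by simp
qed

lemma distF_le_1:
  assumes "finite F" "d > 0"
  shows "distF d F \<phi> \<psi> \<le> 1"
proof -
  have "ddist d \<sigma> \<tau> \<le> 1" for \<sigma> \<tau>
  proof -
    have "card {i\<in>{1..d}. \<sigma> i \<noteq> \<tau> i} \<le> card {1..d}" by (intro card_mono) auto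
    then show ?thesis using \<open>d > 0\<close> unfolding ddist_def by simp
  qed
  then show ?thesis unfolding distF_def using assms(1) by (intro Max.boundedI) auto
qed

lemma restrict_in_hball_product:
  assumes "finite F" "d > 0" "\<phi> \<in> pperm_valued F d" "distF d F \<phi> \<psi> \<le> \<epsilon>"
  shows "restrict \<phi> F \<in> (\<Pi>\<^sub>E S\<in>F. hball d (\<psi> S) (nat \<lfloor>\<epsilon> * d\<rfloor>))"
proof -
  have "\<phi> S \<in> hball d (\<psi> S) (nat \<lfloor>\<epsilon> * d\<rfloor>)" if "S \<in> F" for S
  proof -
    have "ddist d (\<phi> S) (\<psi> S) \<le> \<epsilon>" using ddist_le_distF[OF assms(1) that, of d \<phi> \<psi>] assms(4) by linarith
    then show ?thesis using assms(2,3) that unfolding hball_def pperm_valued_def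
      by (auto intro: card_disagree_le)
  qed
  then show ?thesis by simp
qed

lemma card_hball_product:
  assumes "finite F"
  shows "card (\<Pi>\<^sub>E S\<in>F. hball d (\<psi> S) k) \<le> (2^d * (d+1)^k) ^ card F"
proof -
  have "card (\<Pi>\<^sub>E S\<in>F. hball d (\<psi> S) k) = (\<Prod>S\<in>F. card (hball d (\<psi> S) k))"
    using assms by (rule card_PiE)
  also have "\<dots> \<le> (\<Prod>S\<in>F. 2^d * (d+1)^k)"
  proof (rule prod_mono)
    fix S show "0 \<le> card (hball d (\<psi> S) k) \<and> card (hball d (\<psi> S) k) \<le> 2^d * (d+1)^k"
      using card_hball[of d "\<psi> S" k] by simp
  qed
  finally show ?thesis by simp
qed

lemma finite_hball_product: "finite F \<Longrightarrow> finite (\<Pi>\<^sub>E S\<in>F. hball d (\<psi> S) k)"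
  by (intro finite_PiE) (auto simp: hball_def intro: finite_subset[OF _ finite_pperm])

section \<open>From approximate covers to exact covers\<close>

text \<open>Abstract refinement step: if the points of \<open>A\<close> lying in each ball of a finite
  \<open>\<epsilon>\<close>-cover have at most \<open>K\<close> distinct restrictions to \<open>F\<close>, then choosing one point of \<open>A\<close>
  per restriction gives an exact cover (radius 0) by at most \<open>|C| K\<close> balls centred in \<open>A\<close>.\<close>

lemma refine_cover:
  fixes A C :: "('b \<Rightarrow> (nat \<rightharpoonup> nat)) set" and B :: "('b \<Rightarrow> (nat \<rightharpoonup> nat)) \<Rightarrow> ('b \<Rightarrow> (nat \<rightharpoonup> nat)) set"
  assumes finC: "finite C" and cov: "A \<subseteq> (\<Union>\<psi>\<in>C. {\<phi>. distF d F \<phi> \<psi> \<le> \<epsilon>})"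
    and finB: "\<And>\<psi>. \<psi> \<in> C \<Longrightarrow> finite (B \<psi>)" and cardB: "\<And>\<psi>. \<psi> \<in> C \<Longrightarrow> card (B \<psi>) \<le> K"
    and restr: "\<And>\<psi> \<phi>. \<psi> \<in> C \<Longrightarrow> \<phi> \<in> A \<Longrightarrow> distF d F \<phi> \<psi> \<le> \<epsilon> \<Longrightarrow> restrict \<phi> F \<in> B \<psi>"
  shows "\<exists>C'\<subseteq>A. finite C' \<and> A \<subseteq> (\<Union>\<psi>\<in>C'. {\<phi>. distF d F \<phi> \<psi> \<le> 0}) \<and> card C' \<le> card C * K"
proof -
  define Rs where "Rs \<psi> = (\<lambda>\<phi>. restrict \<phi> F) ` (A \<inter> {\<phi>. distF d F \<phi> \<psi> \<le> \<epsilon>})" for \<psi>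
  define rep where "rep r = (SOME \<phi>. \<phi> \<in> A \<and> restrict \<phi> F = r)" for r
  define C' where "C' = (\<Union>\<psi>\<in>C. rep ` Rs \<psi>)"
  have rep: "rep r \<in> A \<and> restrict (rep r) F = r" if "r \<in> Rs \<psi>" for r \<psi>
  proof -
    from that obtain \<phi> where "\<phi> \<in> A" "restrict \<phi> F = r" unfolding Rs_def by blast
    then show ?thesis unfolding rep_def by (intro someI[of "\<lambda>\<phi>. \<phi> \<in> A \<and> restrict \<phi> F = r"]) simp
  qed
  have Rs_sub: "Rs \<psi> \<subseteq> B \<psi>" if "\<psi> \<in> C" for \<psi>
    using restr[OF that] unfolding Rs_def by blast
  have card_rep: "card (rep ` Rs \<psi>) \<le> K" if "\<psi> \<in> C" for \<psi>
  proof -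
    have "card (rep ` Rs \<psi>) \<le> card (Rs \<psi>)"
      by (rule card_image_le) (rule finite_subset[OF Rs_sub[OF that] finB[OF that]])
    also have "\<dots> \<le> card (B \<psi>)" by (rule card_mono[OF finB[OF that] Rs_sub[OF that]])
    finally show ?thesis using cardB[OF that] by linarith
  qed
  have "C' \<subseteq> A" unfolding C'_def using rep by blast
  moreover have "finite C'"
    unfolding C'_def using finC finB Rs_sub by (meson finite_UN_I finite_imageI finite_subset)
  moreover have "A \<subseteq> (\<Union>\<psi>\<in>C'. {\<phi>. distF d F \<phi> \<psi> \<le> 0})"
  proof
    fix \<phi> assume "\<phi> \<in> A"
    then obtain \<psi> where "\<psi> \<in> C" "distF d F \<phi> \<psi> \<le> \<epsilon>" using cov by blast
    then have r: "restrict \<phi> F \<in> Rs \<psi>" unfolding Rs_def using \<open>\<phi> \<in> A\<close> by blast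
    have "distF d F \<phi> (rep (restrict \<phi> F)) = 0"
    proof (rule distF_eq_0_if_agree)
      fix S assume "S \<in> F"
      then show "\<phi> S = rep (restrict \<phi> F) S"
        using fun_cong[OF conjunct2[OF rep[OF r]], of S] by simp
    qed
    moreover have "rep (restrict \<phi> F) \<in> C'" unfolding C'_def using \<open>\<psi> \<in> C\<close> r by blast
    ultimately show "\<phi> \<in> (\<Union>\<psi>\<in>C'. {\<phi>. distF d F \<phi> \<psi> \<le> 0})" by force
  qed
  moreover have "card C' \<le> card C * K"
  proof -
    have "card C' \<le> (\<Sum>\<psi>\<in>C. card (rep ` Rs \<psi>))" unfolding C'_def by (rule card_UN_le[OF finC])
    also have "\<dots> \<le> (\<Sum>\<psi>\<in>C. K)" using card_rep by (rule sum_mono)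
    finally show ?thesis by simp
  qed
  ultimately show ?thesis by blast
qed

lemma exact_cover_from_approx_cover:
  assumes finF: "finite F" and d: "d > 0" and AV: "A \<subseteq> pperm_valued F d"
    and finC: "finite C" and cov: "A \<subseteq> (\<Union>\<psi>\<in>C. {\<phi>. distF d F \<phi> \<psi> \<le> \<epsilon>})"
  shows "\<exists>C'\<subseteq>A. finite C' \<and> A \<subseteq> (\<Union>\<psi>\<in>C'. {\<phi>. distF d F \<phi> \<psi> \<le> 0}) \<and>
     card C' \<le> card C * (2^d * (d+1)^(nat \<lfloor>\<epsilon> * d\<rfloor>)) ^ card F"
proof (rule refine_cover[OF finC cov])
  let ?B = "\<lambda>\<psi>. \<Pi>\<^sub>E S\<in>F. hball d (\<psi> S) (nat \<lfloor>\<epsilon> * d\<rfloor>)"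
  show "finite (?B \<psi>)" for \<psi> using finF by (rule finite_hball_product)
  show "card (?B \<psi>) \<le> (2^d * (d+1)^(nat \<lfloor>\<epsilon> * d\<rfloor>)) ^ card F" for \<psi>
    using finF by (rule card_hball_product)
  show "restrict \<phi> F \<in> ?B \<psi>" if "\<phi> \<in> A" "distF d F \<phi> \<psi> \<le> \<epsilon>" for \<phi> \<psi>
    using restrict_in_hball_product[OF finF d] AV that by blast
qed

section \<open>Comparing the covering numbers \<open>N\<^sub>0\<close> and \<open>N\<^sub>\<epsilon>\<close>\<close>

text \<open>The single ball of radius 1 around a constant map
  covers everything, which shows that \<open>\<epsilon>\<close>-covers exist and the infimum is attained.\<close>

lemma covnum_exact_le:
  assumes finF: "finite F" and FG: "F \<subseteq> fullpg M R" and d: "d > 0"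
    and AV: "A \<subseteq> pperm_valued (fullpg M R) d" and e: "\<epsilon> \<ge> 0"
  shows "covnum M R F d 0 A \<le> covnum M R F d \<epsilon> A * (2^d * (d+1)^(nat \<lfloor>\<epsilon> * d\<rfloor>)) ^ card F"
proof -
  let ?V = "pperm_valued (fullpg M R) d"
  define covers where "covers e = {C. finite C \<and> C \<subseteq> ?V \<and>
      A \<subseteq> (\<Union>\<psi>\<in>C. {\<phi>. distF d F \<phi> \<psi> \<le> e})}" for e
  have covnum_eq: "covnum M R F d e A = Inf (card ` covers e)" for e
    unfolding covnum_def covers_def pperm_valued_def by (rule arg_cong[where f = Inf]) blast
  have AF: "A \<subseteq> pperm_valued F d" using AV FG unfolding pperm_valued_def by blast
  have "A \<subseteq> (\<Union>\<psi>\<in>{\<lambda>S. pid d}. {\<phi>. distF d F \<phi> \<psi> \<le> 1})" using distF_le_1[OF finF d] by blast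
  from exact_cover_from_approx_cover[OF finF d AF _ this]
  obtain C0 where C0: "C0 \<subseteq> A" "finite C0" "A \<subseteq> (\<Union>\<psi>\<in>C0. {\<phi>. distF d F \<phi> \<psi> \<le> 0})"
    by auto
  have "(\<Union>\<psi>\<in>C0. {\<phi>. distF d F \<phi> \<psi> \<le> 0}) \<subseteq> (\<Union>\<psi>\<in>C0. {\<phi>. distF d F \<phi> \<psi> \<le> \<epsilon>})"
    using e by (intro UN_mono) auto
  with C0(3) have "A \<subseteq> (\<Union>\<psi>\<in>C0. {\<phi>. distF d F \<phi> \<psi> \<le> \<epsilon>})" by (rule subset_trans)
  moreover have "C0 \<subseteq> ?V" using C0(1) AV by (rule subset_trans)
  ultimately have "C0 \<in> covers \<epsilon>" unfolding covers_def using C0(2) by blast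
  then have "Inf (card ` covers \<epsilon>) \<in> card ` covers \<epsilon>" by (intro Inf_nat_def1) blast
  then obtain C where "C \<in> covers \<epsilon>" and card_C: "card C = covnum M R F d \<epsilon> A"
    unfolding covnum_eq by (elim imageE) simp
  then have C: "finite C" "A \<subseteq> (\<Union>\<psi>\<in>C. {\<phi>. distF d F \<phi> \<psi> \<le> \<epsilon>})" unfolding covers_def by auto
  obtain C' where C': "C' \<subseteq> A" "finite C'" "A \<subseteq> (\<Union>\<psi>\<in>C'. {\<phi>. distF d F \<phi> \<psi> \<le> 0})"
     "card C' \<le> card C * (2^d * (d+1)^(nat \<lfloor>\<epsilon> * d\<rfloor>)) ^ card F"
    using exact_cover_from_approx_cover[OF finF d AF C] by blast
  have "C' \<subseteq> ?V" using C'(1) AV by (rule subset_trans)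
  then have "C' \<in> covers 0" unfolding covers_def using C'(2,3) by blast
  then have "covnum M R F d 0 A \<le> card C'" unfolding covnum_eq by (intro cInf_lower) auto
  then show ?thesis using C'(4) card_C by simp
qed

text \<open>The same estimate after normalising by \<open>d log d\<close>: the error term is
  \<open>c (ln 2 / ln d + 2 \<epsilon>)\<close>, using \<open>ln (d+1) \<le> 2 ln d\<close>.\<close>

lemma lognorm_le_shift:
  fixes N0 Ne k c d :: nat and \<epsilon> :: real
  assumes d: "d \<ge> 2" and N: "N0 \<le> Ne * (2^d * (d+1)^k)^c" and k: "real k \<le> \<epsilon> * d" and e: "\<epsilon> \<ge> 0"
  shows "lognorm d N0 \<le> lognorm d Ne + ereal (c * (ln 2 / ln d + 2 * \<epsilon>))"
proof (cases "N0 = 0")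
  case True then show ?thesis by (simp add: lognorm_def)
next
  case False
  then have Ne: "Ne > 0" using N by (cases "Ne = 0") auto
  have lnd: "ln (real d) > 0" using d by simp
  have dpos: "real d > 0" using d by simp
  have ln_succ: "ln (real d + 1) \<le> 2 * ln d"
  proof -
    have "2 * real d \<le> real d * real d" using d by (intro mult_right_mono) auto
    then have "real d + 1 \<le> real d * real d" using d by linarith
    then have "ln (real d + 1) \<le> ln (real d * real d)" using dpos by simp
    also have "\<dots> = 2 * ln d" using dpos by (simp add: ln_mult)
    finally show ?thesis .
  qed
  have "real N0 \<le> real (Ne * (2^d * (d+1)^k)^c)" using N by (simp only: of_nat_le_iff)
  also have "\<dots> = real Ne * (2^d * (real d+1)^k)^c" by (simp add: add.commute)
  finally have "real N0 \<le> real Ne * (2^d * (real d+1)^k)^c" .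
  then have "ln (real N0) \<le> ln (real Ne * (2^d * (real d+1)^k)^c)"
    using False by (subst ln_le_cancel_iff) auto
  also have "\<dots> = ln (real Ne) + c * (d * ln 2 + k * ln (real d + 1))"
    using Ne by (simp add: ln_mult ln_realpow)
  also have "\<dots> \<le> ln (real Ne) + c * (d * ln 2 + (\<epsilon> * d) * (2 * ln d))"
    using k ln_succ lnd by (intro add_left_mono mult_left_mono mult_mono) auto
  finally have L: "ln (real N0) \<le> ln (real Ne) + c * (d * ln 2 + (\<epsilon> * d) * (2 * ln d))" .
  have "ln (real N0) / (real d * ln d) \<le> (ln (real Ne) + c * (d * ln 2 + (\<epsilon> * d) * (2 * ln d))) / (real d * ln d)"
    using L lnd dpos by (intro divide_right_mono) auto
  also have "\<dots> = ln (real Ne) / (real d * ln d) + c * (ln 2 / ln d + 2 * \<epsilon>)"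
    using lnd dpos by (simp add: field_simps)
  finally show ?thesis using False Ne by (simp add: lognorm_def)
qed

text \<open>With \<open>\<epsilon> = \<kappa> / (4 (c+1))\<close> the normalised error is eventually at most \<open>\<kappa>\<close>: the term
  \<open>c ln 2 / ln d\<close> tends to 0 and \<open>2 c \<epsilon> \<le> \<kappa>/2\<close>.\<close>

lemma error_term_eventually_le:
  fixes c :: nat and \<kappa> :: real
  assumes \<kappa>: "\<kappa> > 0"
  shows "eventually (\<lambda>d. c * (ln 2 / ln (real d) + 2 * (\<kappa> / (4 * (c + 1)))) \<le> \<kappa>) sequentially"
proof -
  have ln_inf: "filterlim (\<lambda>d. ln (real d)) at_infinity sequentially"
    by (intro filterlim_at_top_imp_at_infinity filterlim_compose[OF ln_at_top filterlim_real_sequentially])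
  have "((\<lambda>d. c * (ln 2 / ln (real d))) \<longlongrightarrow> real c * 0) sequentially"
    by (intro tendsto_mult tendsto_const tendsto_divide_0[OF tendsto_const ln_inf])
  then have small: "eventually (\<lambda>d. c * (ln 2 / ln (real d)) < \<kappa> / 2) sequentially"
    using \<kappa> by (intro order_tendstoD(2)) auto
  have "c * (2 * (\<kappa> / (4 * (c + 1)))) = \<kappa> / 2 * (c / (c + 1))" by (simp add: field_simps)
  also have "\<dots> \<le> \<kappa> / 2" using \<kappa> by (intro mult_left_le) auto
  finally have const_part: "c * (2 * (\<kappa> / (4 * (c + 1)))) \<le> \<kappa> / 2" .
  from small show ?thesis
  proof eventually_elim
    case (elim d)
    then show ?case using const_part unfolding distrib_left by linarith
  qed
qed

lemma lognorm_covnum_eventually_le: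
  assumes finF: "finite F" and FG: "F \<subseteq> fullpg M R" and \<kappa>: "\<kappa> > 0"
    and \<epsilon>: "\<epsilon> = \<kappa> / (4 * (card F + 1))"
  shows "eventually (\<lambda>d. lognorm d (covnum M R F d 0 (SA M R F n \<delta> d))
            \<le> lognorm d (covnum M R F d \<epsilon> (SA M R F n \<delta> d)) + ereal \<kappa>) sequentially"
  using error_term_eventually_le[OF \<kappa>, of "card F"] eventually_ge_at_top[of "2::nat"]
proof eventually_elim
  case (elim d)
  have e: "\<epsilon> \<ge> 0" unfolding \<epsilon> using \<kappa> by simp
  have SA_valued: "SA M R F n \<delta> d \<subseteq> pperm_valued (fullpg M R) d"
    unfolding SA_def pperm_valued_def by auto
  have "real (nat \<lfloor>\<epsilon> * d\<rfloor>) \<le> \<epsilon> * d" using e by simp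
  moreover note covnum_exact_le[OF finF FG _ SA_valued e]
  ultimately have "lognorm d (covnum M R F d 0 (SA M R F n \<delta> d))
      \<le> lognorm d (covnum M R F d \<epsilon> (SA M R F n \<delta> d)) + ereal (card F * (ln 2 / ln d + 2 * \<epsilon>))"
    using elim(2) e by (intro lognorm_le_shift) auto
  also have "\<dots> \<le> lognorm d (covnum M R F d \<epsilon> (SA M R F n \<delta> d)) + ereal \<kappa>"
    using elim(1) unfolding \<epsilon> by (intro add_left_mono) simp
  finally show ?case .
qed

section \<open>Limit functionals\<close>

text \<open>Limsup, liminf and limits along nonprincipal
  ultrafilters are examples; these are exactly the properties used to pass from the eventual
  estimate to the sofic dimensions.\<close>

definition limit_functional :: "((nat \<Rightarrow> ereal) \<Rightarrow> ereal) \<Rightarrow> bool" where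
  "limit_functional L \<longleftrightarrow>
     (\<forall>u v. eventually (\<lambda>d. u d \<le> v d) sequentially \<longrightarrow> L u \<le> L v) \<and>
     (\<forall>u c. L (\<lambda>d. u d + ereal c) = L u + ereal c)"

lemma limit_functional_limsup: "limit_functional limsup"
  unfolding limit_functional_def by (auto intro: Limsup_mono Limsup_add_ereal_right)

lemma limit_functional_liminf: "limit_functional liminf"
  unfolding limit_functional_def by (auto intro: Liminf_mono Liminf_add_ereal_right)

lemma nonprincipal_ultrafilter_sequentially:
  assumes U: "nonprincipal_ultrafilter \<omega>" and ev: "eventually P sequentially"
  shows "eventually P \<omega>"
proof -
  obtain N where N: "\<And>n. n \<ge> N \<Longrightarrow> P n" using ev unfolding eventually_sequentially by blast
  have "eventually (\<lambda>x. x \<noteq> k) \<omega>" for k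
    using U unfolding nonprincipal_ultrafilter_def by metis
  then have "eventually (\<lambda>x. \<forall>k\<in>{..<N}. x \<noteq> k) \<omega>" by (intro eventually_ball_finite) auto
  then show ?thesis by (rule eventually_mono) (metis N lessThan_iff not_le)
qed

text \<open>Along an ultrafilter every sequence in the complete lattice of extended reals converges,
  namely to its limsup.\<close>

lemma Lim_nonprincipal_ultrafilter:
  fixes u :: "nat \<Rightarrow> ereal"
  assumes U: "nonprincipal_ultrafilter \<omega>"
  shows "Lim \<omega> u = Limsup \<omega> u"
proof -
  have "(u \<longlongrightarrow> Limsup \<omega> u) \<omega>"
  proof (rule order_tendstoI)
    fix a assume a: "a < Limsup \<omega> u"
    show "eventually (\<lambda>x. a < u x) \<omega>"
    proof (rule ccontr)
      assume "\<not> eventually (\<lambda>x. a < u x) \<omega>"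
      then have "eventually (\<lambda>x. \<not> a < u x) \<omega>" using U unfolding nonprincipal_ultrafilter_def by metis
      then have "eventually (\<lambda>x. u x \<le> a) \<omega>" by (rule eventually_mono) auto
      then have "Limsup \<omega> u \<le> a" by (rule Limsup_bounded)
      then show False using a by simp
    qed
  next
    fix b assume "Limsup \<omega> u < b"
    then show "eventually (\<lambda>x. u x < b) \<omega>" by (rule Limsup_lessD)
  qed
  then show ?thesis using U unfolding nonprincipal_ultrafilter_def by (intro tendsto_Lim) auto
qed

lemma limit_functional_Lim:
  assumes U: "nonprincipal_ultrafilter \<omega>"
  shows "limit_functional (\<lambda>f. Lim \<omega> f)"
proof -
  have "\<omega> \<noteq> bot" using U unfolding nonprincipal_ultrafilter_def by auto
  then show ?thesis
    unfolding limit_functional_def Lim_nonprincipal_ultrafilter[OF U]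
    by (auto intro: Limsup_mono nonprincipal_ultrafilter_sequentially[OF U] Limsup_add_ereal_right)
qed

lemma INF_limit_functional_le:
  fixes f g :: "real \<Rightarrow> nat \<Rightarrow> ereal" and L :: "(nat \<Rightarrow> ereal) \<Rightarrow> ereal"
  assumes L: "limit_functional L"
    and ev: "\<And>\<delta>. eventually (\<lambda>d. f \<delta> d \<le> g \<delta> d + ereal \<kappa>) sequentially"
  shows "(INF \<delta>\<in>{0<..}. L (f \<delta>)) \<le> (INF \<delta>\<in>{0<..}. L (g \<delta>)) + ereal \<kappa>"
proof -
  have mono: "L u \<le> L v" if "eventually (\<lambda>d. u d \<le> v d) sequentially" for u v
    using L that unfolding limit_functional_def by blast
  have shift: "L (\<lambda>d. u d + ereal c) = L u + ereal c" for u c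
    using L unfolding limit_functional_def by blast
  let ?a = "INF \<delta>\<in>{0<..}. L (f \<delta>)"
  have "?a - ereal \<kappa> \<le> L (g \<delta>)" if "\<delta> \<in> {0<..}" for \<delta>
  proof -
    have "?a \<le> L (f \<delta>)" using that by (rule INF_lower)
    also have "\<dots> \<le> L (\<lambda>d. g \<delta> d + ereal \<kappa>)" by (rule mono[OF ev])
    also have "\<dots> = L (g \<delta>) + ereal \<kappa>" by (rule shift)
    finally show ?thesis using ereal_minus_le[of "ereal \<kappa>" ?a] by simp
  qed
  then have "?a - ereal \<kappa> \<le> (INF \<delta>\<in>{0<..}. L (g \<delta>))" by (rule INF_greatest)
  then show ?thesis using ereal_minus_le[of "ereal \<kappa>" ?a] by simp
qed

lemma sdim_exact_le_approx:
  assumes "finite F" "F \<subseteq> fullpg M R" "limit_functional L" "\<kappa> > 0"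
  shows "\<exists>\<epsilon>>0. \<forall>n. sdim L M R F n 0 \<le> sdim L M R F n \<epsilon> + ereal \<kappa>"
proof (intro exI conjI allI)
  let ?\<epsilon> = "\<kappa> / (4 * (card F + 1))"
  show "?\<epsilon> > 0" using \<open>\<kappa> > 0\<close> by simp
  show "sdim L M R F n 0 \<le> sdim L M R F n ?\<epsilon> + ereal \<kappa>" for n
    unfolding sdim_def using assms(3)
    by (rule INF_limit_functional_le) (rule lognorm_covnum_eventually_le[OF assms(1,2,4) refl])
qed

text \<open>Theorem 9 for limsup, liminf and every nonprincipal ultrafilter.  Only finiteness of
  \<open>F\<close> enters the counting argument; the pmp hypothesis merely fixes the setting.\<close>

theorem mainTheorem9:
  fixes M :: "'a::polish_space measure" and R :: "('a \<times> 'a) set"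
    and F :: "('a \<rightharpoonup> 'a) set set"
  assumes "pmp_cber M R" and "finite F" and "F \<subseteq> fullpg M R"
  shows "(\<forall>\<kappa>>0. \<exists>\<epsilon>>0. \<forall>n. sdim limsup M R F n 0 \<le> sdim limsup M R F n \<epsilon> + ereal \<kappa>)
       \<and> (\<forall>\<kappa>>0. \<exists>\<epsilon>>0. \<forall>n. sdim liminf M R F n 0 \<le> sdim liminf M R F n \<epsilon> + ereal \<kappa>)
       \<and> (\<forall>\<omega>. nonprincipal_ultrafilter \<omega> \<longrightarrow>
            (\<forall>\<kappa>>0. \<exists>\<epsilon>>0. \<forall>n. sdim (\<lambda>f. Lim \<omega> f) M R F n 0 \<le> sdim (\<lambda>f. Lim \<omega> f) M R F n \<epsilon> + ereal \<kappa>))"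
proof -
  have comparison: "\<forall>\<kappa>>0. \<exists>\<epsilon>>0. \<forall>n. sdim L M R F n 0 \<le> sdim L M R F n \<epsilon> + ereal \<kappa>"
    if "limit_functional L" for L
    using sdim_exact_le_approx[OF assms(2,3) that] by blast
  show ?thesis
    using comparison[OF limit_functional_limsup] comparison[OF limit_functional_liminf]
      comparison[OF limit_functional_Lim] by blast
qed

end
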